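(* Let $f:\mathbb{R}\to\mathbb{R}$ be a Lipschitz continuous, 1-periodic function which is exactly 1-periodic, in the sense that $f(\cdot-\theta)\neq f(\cdot-\theta^* )$ on a set of positive Lebesgue measure whenever $\theta\neq\theta^*\bmod 1$. Let $Z_1,\dots,Z_n$ be iid with an even density $\phi$ and distribution function $\Phi$, and observe $Y_i=f(x_i-\theta^* )+Z_i$, $i=1,\dots,n$, where $x_i:=i/n$. Let $\Phi_2(t):=\int_{-\infty}^\infty\Phi(t+z)\phi(z)\,dz$ and $$M(\theta):=\int_0^1\!\!\int_0^1 \Phi_2\big(f(x_0)-f(x)\big)\, f(x_0+\theta^*-\theta)\,dx\,dx_0,$$ and assume that $\theta^*$ is the unique maximum point of $M$ modulo 1 (i.e. $M(\theta)<M(\theta^* )$ whenever $\theta\neq\theta^*\bmod 1$). Let $R_i$ be the rank of $Y_i$ among $Y_1,\dots,Y_n$ and let $\hat\theta_n$ be a maximizer over $\theta$ of $\widehat M_n(\theta):=\frac1n\sum_{i=1}^n\frac{R_i}{n}f(x_i-\theta)$. Then $\hat\theta_n\to\theta^*$ in probability as $n\to\infty$ (convergence understood modulo 1, i.e. the distance in $\mathbb{R}/\mathbb{Z}$ between $\hat\theta_n$ and $\theta^*$ tends to 0 in probability).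
   Context: $\hat\theta_n$ is the rank-based (R-)estimator of the shift; since $f$ and $\widehat M_n$ are 1-periodic, the shift is identified only modulo 1. *)

theory Defs
  imports "HOL-Probability.Probability"
begin

definition dist_mod1 :: "real \<Rightarrow> real \<Rightarrow> real" where
  "dist_mod1 a b = (INF k::int. \<bar>a - b - of_int k\<bar>)"

definition Phi :: "(real \<Rightarrow> real) \<Rightarrow> real \<Rightarrow> real" where
  "Phi \<phi> t = (LBINT y:{..t}. \<phi> y)"

definition Phi2 :: "(real \<Rightarrow> real) \<Rightarrow> real \<Rightarrow> real" where
  "Phi2 \<phi> t = (LINT z|lborel. Phi \<phi> (t + z) * \<phi> z)"

definition Mfun :: "(real \<Rightarrow> real) \<Rightarrow> (real \<Rightarrow> real) \<Rightarrow> real \<Rightarrow> real \<Rightarrow> real" where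
  "Mfun f \<phi> \<theta>s \<theta> =
     (LBINT x0=0..1. (LBINT x=0..1. Phi2 \<phi> (f x0 - f x) * f (x0 + \<theta>s - \<theta>)))"

text \<open>Rank of Y i among Y 1, ..., Y n (ties counted with \<le>; they occur with probability 0).\<close>
definition rank :: "(nat \<Rightarrow> real) \<Rightarrow> nat \<Rightarrow> nat \<Rightarrow> nat" where
  "rank Y n i = card {j \<in> {1..n}. Y j \<le> Y i}"

definition Mhat :: "(real \<Rightarrow> real) \<Rightarrow> (nat \<Rightarrow> real) \<Rightarrow> nat \<Rightarrow> real \<Rightarrow> real" where
  "Mhat f Y n \<theta> = (1 / real n) * (\<Sum>i=1..n. (real (rank Y n i) / real n) * f (real i / real n - \<theta>))"

end

theory Submission
  imports Defs "HOL-Library.Periodic_Fun"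
begin

text \<open>
  For fixed \<open>\<theta>\<close>, \<open>n\<^sup>2 Mhat\<^sub>n(\<theta>) = \<Sum>\<^sub>i f(x\<^sub>i - \<theta>) R\<^sub>i\<close> is a weighted sum of the \<open>n\<^sup>2\<close> comparison
  indicators \<open>[Y\<^sub>j \<le> Y\<^sub>i]\<close>. Indicators belonging to index pairs without a common index are
  independent, so the variance of this sum is \<open>O(n\<^sup>3)\<close> and Chebyshev's inequality gives
  \<open>Mhat\<^sub>n(\<theta>) - E Mhat\<^sub>n(\<theta>) \<rightarrow> 0\<close> in probability. For \<open>i \<noteq> j\<close> the indicator has mean
  \<open>Phi2(f(x\<^sub>i - \<theta>\<^sup>*) - f(x\<^sub>j - \<theta>\<^sup>*))\<close>, so \<open>E Mhat\<^sub>n(\<theta>)\<close> is a Riemann sum of the double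
  integral \<open>M(\<theta>)\<close>. Both \<open>Mhat\<^sub>n\<close> and \<open>M\<close> are Lipschitz and 1-periodic in \<open>\<theta>\<close>, so convergence on a
  finite grid controls them uniformly, and the well-separated maximum of \<open>M\<close> on the circle
  forces every maximiser of \<open>Mhat\<^sub>n\<close> towards \<open>\<theta>\<^sup>*\<close> modulo 1.
\<close>

section \<open>Riemann sums of continuous functions\<close>

lemma abs_integral_diff_le:
  fixes g h :: "real \<Rightarrow> real"
  assumes "continuous_on {a..b} g" "continuous_on {a..b} h" "a \<le> b"
    and "\<And>x. x \<in> {a..b} \<Longrightarrow> \<bar>g x - h x\<bar> \<le> e"
  shows "\<bar>integral {a..b} g - integral {a..b} h\<bar> \<le> e * (b - a)"
proof -
  have "integral {a..b} (\<lambda>x. g x - h x) = integral {a..b} g - integral {a..b} h"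
    using assms by (intro integral_diff integrable_continuous_interval)
  moreover have "norm (integral {a..b} (\<lambda>x. g x - h x)) \<le> e * (b - a)"
    using assms by (intro integral_bound continuous_intros) auto
  ultimately show ?thesis by simp
qed

lemma integral_uniform_partition:
  fixes h :: "real \<Rightarrow> real"
  assumes cont: "continuous_on {a..a+1} h" and n: "n > 0" and "m \<le> n"
  shows "integral {a..a + real m / n} h = (\<Sum>j=1..m. integral {a + (real j - 1) / n..a + real j / n} h)"
  using \<open>m \<le> n\<close>
proof (induction m)
  case (Suc m)
  have "a + real (Suc m) / n \<le> a + 1" using Suc.prems n by (simp add: field_simps)
  then have "integral {a..a + real m / n} h + integral {a + real m / n..a + real (Suc m) / n} h
        = integral {a..a + real (Suc m) / n} h"
    using n by (intro Henstock_Kurzweil_Integration.integral_combine integrable_continuous_interval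
        continuous_on_subset[OF cont]) (auto simp: divide_right_mono)
  then show ?case using Suc by (simp add: add_diff_eq)
qed simp

lemma riemann_sum_error_le:
  fixes h :: "real \<Rightarrow> real"
  assumes cont: "continuous_on {a..a+1} h"
    and modulus: "\<And>x y. x \<in> {a..a+1} \<Longrightarrow> y \<in> {a..a+1} \<Longrightarrow> \<bar>x - y\<bar> \<le> d \<Longrightarrow> \<bar>h x - h y\<bar> \<le> e"
    and n: "n > 0" "1 / real n \<le> d"
  shows "\<bar>(\<Sum>j=1..n. h (a + real j / n)) / n - integral {a..a+1} h\<bar> \<le> e"
proof -
  let ?l = "\<lambda>j. a + (real j - 1) / n" and ?r = "\<lambda>j. a + real j / n"
  have piece: "\<bar>h (?r j) / n - integral {?l j..?r j} h\<bar> \<le> e / n" if j: "j \<in> {1..n}" for j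
  proof -
    have width: "?r j - ?l j = 1 / n" by (simp add: diff_divide_distrib)
    then have lr: "?l j \<le> ?r j" by (smt (verit) of_nat_0_le_iff zero_le_divide_1_iff)
    have sub: "{?l j..?r j} \<subseteq> {a..a+1}" using j n by (auto simp: field_simps)
    then have ch: "continuous_on {?l j..?r j} h" using continuous_on_subset[OF cont] by blast
    have "\<bar>integral {?l j..?r j} h - integral {?l j..?r j} (\<lambda>_. h (?r j))\<bar> \<le> e * (?r j - ?l j)"
    proof (intro abs_integral_diff_le ch continuous_on_const lr)
      fix t assume t: "t \<in> {?l j..?r j}"
      then have "\<bar>t - ?r j\<bar> \<le> d" using width n(2) by auto
      then show "\<bar>h t - h (?r j)\<bar> \<le> e" using modulus[of t "?r j"] sub t lr by auto
    qed
    moreover have "integral {?l j..?r j} (\<lambda>_. h (?r j)) = h (?r j) / n" using width lr by simp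
    ultimately show ?thesis using width by (simp add: abs_minus_commute)
  qed
  have "integral {a..a+1} h = (\<Sum>j=1..n. integral {?l j..?r j} h)"
    using integral_uniform_partition[OF cont n(1), of n] n by simp
  then have "\<bar>(\<Sum>j=1..n. h (?r j)) / n - integral {a..a+1} h\<bar>
      = \<bar>\<Sum>j=1..n. h (?r j) / n - integral {?l j..?r j} h\<bar>"
    by (simp add: sum_subtractf sum_divide_distrib)
  also have "\<dots> \<le> (\<Sum>j=1..n. e / n)"
    by (rule order_trans[OF sum_abs sum_mono]) (use piece in auto)
  also have "\<dots> = e" using n by simp
  finally show ?thesis .
qed

lemma riemann_sum_2d_error_le:
  fixes G :: "real \<Rightarrow> real \<Rightarrow> real"
  assumes cont: "continuous_on ({a..a+1} \<times> {a..a+1}) (\<lambda>(u, v). G u v)"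
    and modulus: "\<And>x y v w. x \<in> {a..a+1} \<Longrightarrow> y \<in> {a..a+1} \<Longrightarrow> v \<in> {a..a+1} \<Longrightarrow> w \<in> {a..a+1}
      \<Longrightarrow> \<bar>x - y\<bar> \<le> d \<Longrightarrow> \<bar>v - w\<bar> \<le> d \<Longrightarrow> \<bar>G x v - G y w\<bar> \<le> e"
    and n: "n > 0" "1 / real n \<le> d"
  shows "\<bar>(\<Sum>i=1..n. \<Sum>j=1..n. G (a + real i / n) (a + real j / n)) / (real n)\<^sup>2
           - integral {a..a+1} (\<lambda>u. integral {a..a+1} (G u))\<bar> \<le> 2 * e"
proof -
  define H where "H u = integral {a..a+1} (G u)" for u
  let ?u = "\<lambda>i. a + real i / n"
  have d: "0 \<le> d" using n(2) by (smt (verit) zero_le_divide_1_iff of_nat_0_le_iff)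
  have slice: "continuous_on {a..a+1} (G u)" if "u \<in> {a..a+1}" for u
  proof -
    have "continuous_on {a..a+1} (\<lambda>v. (\<lambda>(u, v). G u v) (u, v))"
      by (rule continuous_on_compose2[OF cont]) (use that in \<open>auto intro!: continuous_intros\<close>)
    then show ?thesis by simp
  qed
  have "continuous_on {a..a+1} H"
    unfolding H_def using integral_continuous_on_param[of "{a..a+1}" a "a+1" G] cont by simp
  moreover have "\<bar>H x - H y\<bar> \<le> e" if "x \<in> {a..a+1}" "y \<in> {a..a+1}" "\<bar>x - y\<bar> \<le> d" for x y
  proof -
    have "\<bar>integral {a..a+1} (G x) - integral {a..a+1} (G y)\<bar> \<le> e * (a + 1 - a)"
      using that d by (intro abs_integral_diff_le slice modulus) auto
    then show ?thesis by (simp add: H_def)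
  qed
  ultimately have outer: "\<bar>(\<Sum>i=1..n. H (?u i)) / n - integral {a..a+1} H\<bar> \<le> e"
    using n by (intro riemann_sum_error_le)
  have inner: "\<bar>(\<Sum>j=1..n. G (?u i) (?u j)) / n - H (?u i)\<bar> \<le> e" if "i \<in> {1..n}" for i
  proof -
    have u: "?u i \<in> {a..a+1}" using that n by auto
    then show ?thesis
      unfolding H_def using n d by (intro riemann_sum_error_le slice) (auto intro: modulus)
  qed
  have "\<bar>\<Sum>i=1..n. (\<Sum>j=1..n. G (?u i) (?u j)) / n - H (?u i)\<bar> \<le> (\<Sum>i=1..n. e)"
    by (rule order_trans[OF sum_abs sum_mono]) (use inner in auto)
  moreover have "(\<Sum>i=1..n. \<Sum>j=1..n. G (?u i) (?u j)) / (real n)\<^sup>2 - (\<Sum>i=1..n. H (?u i)) / n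
      = (\<Sum>i=1..n. (\<Sum>j=1..n. G (?u i) (?u j)) / n - H (?u i)) / n"
    by (simp add: sum_subtractf diff_divide_distrib sum_divide_distrib[symmetric] power2_eq_square)
  ultimately have "\<bar>(\<Sum>i=1..n. \<Sum>j=1..n. G (?u i) (?u j)) / (real n)\<^sup>2 - (\<Sum>i=1..n. H (?u i)) / n\<bar> \<le> e"
    using n by (simp add: pos_divide_le_eq mult.commute)
  with outer show ?thesis unfolding H_def by linarith
qed

lemma riemann_sum_2d_tendsto:
  fixes G :: "real \<Rightarrow> real \<Rightarrow> real"
  assumes cont: "continuous_on ({a..a+1} \<times> {a..a+1}) (\<lambda>(u, v). G u v)"
  shows "(\<lambda>n. (\<Sum>i=1..n. \<Sum>j=1..n. G (a + real i / n) (a + real j / n)) / (real n)\<^sup>2)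
           \<longlonglongrightarrow> integral {a..a+1} (\<lambda>u. integral {a..a+1} (G u))"
proof (rule LIMSEQ_I)
  fix e :: real assume "e > 0"
  define S where "S = {a..a+1} \<times> {a..a+1}"
  have "uniformly_continuous_on S (\<lambda>(u, v). G u v)"
    unfolding S_def by (intro compact_uniformly_continuous cont compact_Times compact_Icc)
  then obtain d where d: "d > 0"
    and dG: "\<And>p q. p \<in> S \<Longrightarrow> q \<in> S \<Longrightarrow> dist q p < d \<Longrightarrow> dist (case_prod G q) (case_prod G p) < e / 3"
    using \<open>e > 0\<close> unfolding uniformly_continuous_on_def by (metis zero_less_divide_iff zero_less_numeral)
  have modulus: "\<bar>G x v - G y w\<bar> \<le> e / 3"
    if "x \<in> {a..a+1}" "y \<in> {a..a+1}" "v \<in> {a..a+1}" "w \<in> {a..a+1}" "\<bar>x - y\<bar> \<le> d / 3" "\<bar>v - w\<bar> \<le> d / 3"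
    for x y v w
  proof -
    have "dist (x, v) (y, w) \<le> \<bar>x - y\<bar> + \<bar>v - w\<bar>"
      by (simp add: dist_Pair_Pair dist_real_def sqrt_sum_squares_le_sum_abs)
    then have "dist (x, v) (y, w) < d" using that d by linarith
    then show ?thesis using dG[of "(y, w)" "(x, v)"] that by (auto simp: S_def dist_real_def)
  qed
  obtain N :: nat where N: "3 / d < real N" using reals_Archimedean2 by blast
  have "norm ((\<Sum>i=1..n. \<Sum>j=1..n. G (a + real i / n) (a + real j / n)) / (real n)\<^sup>2
                - integral {a..a+1} (\<lambda>u. integral {a..a+1} (G u))) < e" if "n \<ge> N" for n
  proof -
    have "3 / d < real n" using N that by (meson of_nat_mono order_less_le_trans)
    moreover have "0 < 3 / d" using d by simp
    ultimately have pos: "0 < real n" by linarith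
    have "3 < d * real n" using \<open>3 / d < real n\<close> d by (simp add: divide_less_eq mult.commute)
    then have "n > 0" "1 / real n \<le> d / 3" using pos by (simp_all add: field_simps)
    then have "\<bar>(\<Sum>i=1..n. \<Sum>j=1..n. G (a + real i / n) (a + real j / n)) / (real n)\<^sup>2
                - integral {a..a+1} (\<lambda>u. integral {a..a+1} (G u))\<bar> \<le> 2 * (e / 3)"
      by (intro riemann_sum_2d_error_le[OF cont, where d="d / 3"] modulus)
    with \<open>e > 0\<close> show ?thesis by simp
  qed
  then show "\<exists>N. \<forall>n\<ge>N. norm ((\<Sum>i=1..n. \<Sum>j=1..n. G (a + real i / n) (a + real j / n)) / (real n)\<^sup>2
                         - integral {a..a+1} (\<lambda>u. integral {a..a+1} (G u))) < e"
    by blast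
qed

lemma integral_periodic_shift:
  fixes h :: "real \<Rightarrow> real"
  assumes cont: "continuous_on UNIV h" and per: "periodic_fun_simple' h"
  shows "integral {a..a+1} h = integral {0..1} h"
proof -
  define m where "m = real_of_int \<lfloor>a\<rfloor>"
  have m: "m \<le> a" "a \<le> m + 1" unfolding m_def by linarith+
  have int: "h integrable_on {c..d}" for c d
    by (rule integrable_continuous_interval, rule continuous_on_subset[OF cont]) auto
  have shift: "integral {c + t..d + t} h = integral {c..d} h" if "t \<in> \<int>" for c d t
  proof -
    interpret periodic_fun_simple' h by (rule per)
    have "h \<circ> (+) t = h"
      using that plus_of_int by (auto elim!: Ints_cases simp: add.commute)
    then show ?thesis using integral_shift_Icc_real[of c d h t] by simp
  qed
  have "integral {a..a+1} h = integral {a..m+1} h + integral {m+1..a+1} h"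
    using m int by (intro Henstock_Kurzweil_Integration.integral_combine[symmetric]) auto
  also have "integral {m+1..a+1} h = integral {m..a} h" using shift[of 1 m a] by simp
  also have "integral {a..m+1} h + integral {m..a} h = integral {m..m+1} h"
    using m int by (subst add.commute, intro Henstock_Kurzweil_Integration.integral_combine) auto
  also have "\<dots> = integral {0..1} h" using shift[of m 0 1] by (simp add: m_def add.commute)
  finally show ?thesis .
qed

section \<open>Consistency of maximisers on the circle\<close>

lemma dist_mod1_le: "dist_mod1 a b \<le> \<bar>a - b - of_int k\<bar>"
  unfolding dist_mod1_def by (rule cINF_lower) (auto intro: bdd_belowI2[where m=0])

lemma exists_int_shift_to_window:
  fixes c x :: real
  obtains k :: int where "c - 1/2 \<le> x - of_int k" "x - of_int k < c + 1/2"
proof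
  show "c - 1/2 \<le> x - of_int \<lfloor>x - c + 1/2\<rfloor>" "x - of_int \<lfloor>x - c + 1/2\<rfloor> < c + 1/2"
    by linarith+
qed

lemma finite_grid_cover:
  fixes a h :: real
  assumes "h > 0"
  obtains G where "finite G" "\<And>x. x \<in> {a..a+1} \<Longrightarrow> \<exists>g\<in>G. \<bar>x - g\<bar> \<le> h"
proof
  define N where "N = nat \<lceil>1 / h\<rceil>"
  show "finite ((\<lambda>m. a + real m * h) ` {0..N})" by simp
  fix x assume x: "x \<in> {a..a+1}"
  define m where "m = nat \<lfloor>(x - a) / h\<rfloor>"
  have "0 \<le> (x - a) / h" using x assms by simp
  then have m: "real m \<le> (x - a) / h" "(x - a) / h < real m + 1"
    unfolding m_def by linarith+
  then have "real m * h \<le> x - a" "x - a < real m * h + h"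
    using assms by (simp_all add: pos_le_divide_eq pos_divide_less_eq algebra_simps)
  moreover have "m \<le> N"
  proof -
    have "(x - a) / h \<le> 1 / h" using x assms by (simp add: divide_right_mono)
    then show ?thesis unfolding N_def using m(1) by linarith
  qed
  ultimately show "\<exists>g\<in>(\<lambda>m. a + real m * h) ` {0..N}. \<bar>x - g\<bar> \<le> h"
    by (intro bexI[of _ "a + real m * h"]) auto
qed

lemma periodic_max_well_separated:
  fixes g :: "real \<Rightarrow> real"
  assumes cont: "continuous_on UNIV g" and per: "periodic_fun_simple' g"
    and unique: "\<forall>\<theta>. \<theta> - \<theta>s \<notin> \<int> \<longrightarrow> g \<theta> < g \<theta>s"
    and \<epsilon>: "0 < \<epsilon>" "\<epsilon> \<le> 1/2"
  obtains \<delta> where "\<delta> > 0" "\<And>\<theta>. \<epsilon> \<le> dist_mod1 \<theta> \<theta>s \<Longrightarrow> g \<theta> \<le> g \<theta>s - \<delta>"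
proof -
  interpret periodic_fun_simple' g by (rule per)
  define K where "K = {\<theta>s - 1/2..\<theta>s - \<epsilon>} \<union> {\<theta>s + \<epsilon>..\<theta>s + 1/2}"
  have "compact K" "K \<noteq> {}" unfolding K_def using \<epsilon> by auto
  then obtain \<theta>0 where \<theta>0: "\<theta>0 \<in> K" "\<And>y. y \<in> K \<Longrightarrow> g y \<le> g \<theta>0"
    using continuous_attains_sup[OF _ _ continuous_on_subset[OF cont]] by (metis subset_UNIV)
  have "\<theta>0 - \<theta>s \<notin> \<int>"
  proof
    assume "\<theta>0 - \<theta>s \<in> \<int>"
    then obtain m where m: "\<theta>0 - \<theta>s = of_int m" by (auto elim: Ints_cases)
    have "\<epsilon> \<le> \<bar>\<theta>0 - \<theta>s\<bar>" "\<bar>\<theta>0 - \<theta>s\<bar> \<le> 1/2" using \<theta>0(1) \<epsilon> unfolding K_def by auto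
    then show False using m \<epsilon> by (cases "m = 0") auto
  qed
  then have gap: "g \<theta>0 < g \<theta>s" using unique by blast
  show ?thesis
  proof
    show "g \<theta>s - g \<theta>0 > 0" using gap by simp
    fix \<theta> assume far: "\<epsilon> \<le> dist_mod1 \<theta> \<theta>s"
    obtain k :: int where k: "\<theta>s - 1/2 \<le> \<theta> - of_int k" "\<theta> - of_int k < \<theta>s + 1/2"
      by (rule exists_int_shift_to_window)
    have "\<epsilon> \<le> \<bar>\<theta> - of_int k - \<theta>s\<bar>" using far dist_mod1_le[of \<theta> \<theta>s k] by argo
    then have "\<theta> - of_int k \<in> K" using k unfolding K_def by auto
    moreover have "g (\<theta> - of_int k) = g \<theta>" by (rule minus_of_int)
    ultimately show "g \<theta> \<le> g \<theta>s - (g \<theta>s - g \<theta>0)" using \<theta>0(2) by fastforce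
  qed
qed

lemma grid_deviation_if_argmax_far:
  fixes F g :: "real \<Rightarrow> real"
  assumes lipF: "L-lipschitz_on UNIV F" and lipg: "L-lipschitz_on UNIV g"
    and perF: "periodic_fun_simple' F" and perg: "periodic_fun_simple' g"
    and sep: "\<And>\<theta>. \<epsilon> \<le> dist_mod1 \<theta> \<theta>s \<Longrightarrow> g \<theta> \<le> g \<theta>s - \<delta>"
    and cover: "\<And>x. x \<in> {\<theta>s - 1/2..\<theta>s + 1/2} \<Longrightarrow> \<exists>y\<in>G. \<bar>x - y\<bar> \<le> h" and h: "L * h \<le> \<delta> / 8"
    and max: "F \<theta>s \<le> F t" and far: "\<epsilon> \<le> dist_mod1 t \<theta>s"
  shows "\<exists>y\<in>insert \<theta>s G. \<delta> / 4 \<le> \<bar>F y - g y\<bar>"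
proof (rule ccontr)
  assume "\<not> ?thesis"
  then have close: "\<bar>F y - g y\<bar> < \<delta> / 4" if "y \<in> insert \<theta>s G" for y
    using that by auto
  have gap: "g t \<le> g \<theta>s - \<delta>" using sep far by simp
  obtain k :: int where k: "\<theta>s - 1/2 \<le> t - of_int k" "t - of_int k < \<theta>s + 1/2"
    by (rule exists_int_shift_to_window)
  then obtain y where y: "y \<in> G" "\<bar>(t - of_int k) - y\<bar> \<le> h"
    using cover[of "t - of_int k"] by auto
  interpret F: periodic_fun_simple' F by (rule perF)
  interpret g: periodic_fun_simple' g by (rule perg)
  have per: "F (t - of_int k) = F t" "g (t - of_int k) = g t"
    by (rule F.minus_of_int g.minus_of_int)+
  have "L * \<bar>(t - of_int k) - y\<bar> \<le> L * h"
    using mult_left_mono[OF y(2) lipschitz_on_nonneg[OF lipF]] .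
  moreover have "\<bar>F (t - of_int k) - F y\<bar> \<le> L * \<bar>(t - of_int k) - y\<bar>"
    "\<bar>g (t - of_int k) - g y\<bar> \<le> L * \<bar>(t - of_int k) - y\<bar>"
    using lipschitz_onD[OF lipF, of "t - of_int k" y] lipschitz_onD[OF lipg, of "t - of_int k" y]
    by (auto simp: dist_real_def)
  moreover have "\<bar>F y - g y\<bar> < \<delta> / 4" "\<bar>F \<theta>s - g \<theta>s\<bar> < \<delta> / 4"
    using close y(1) by auto
  ultimately show False using per gap max h by linarith
qed

lemma (in prob_space) prob_finite_Union_tendsto_0:
  assumes "finite I" and sets: "\<And>n i. i \<in> I \<Longrightarrow> E n i \<in> sets M"
    and lim: "\<And>i. i \<in> I \<Longrightarrow> (\<lambda>n. prob (E n i)) \<longlonglongrightarrow> 0"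
  shows "(\<lambda>n. prob (\<Union>i\<in>I. E n i)) \<longlonglongrightarrow> 0"
proof (rule Lim_null_comparison)
  show "\<forall>\<^sub>F n in sequentially. norm (prob (\<Union>i\<in>I. E n i)) \<le> (\<Sum>i\<in>I. prob (E n i))"
    using assms by (intro always_eventually allI) (auto intro!: finite_measure_subadditive_finite)
  show "(\<lambda>n. \<Sum>i\<in>I. prob (E n i)) \<longlonglongrightarrow> 0" using lim by (rule tendsto_null_sum)
qed

lemma (in prob_space) argmax_consistent_mod1:
  fixes Mn :: "nat \<Rightarrow> 'a \<Rightarrow> real \<Rightarrow> real" and Mlim :: "real \<Rightarrow> real"
    and \<theta>hat :: "nat \<Rightarrow> 'a \<Rightarrow> real"
  assumes meas: "\<And>n \<theta>. (\<lambda>\<omega>. Mn n \<omega> \<theta>) \<in> borel_measurable M"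
    and lipMn: "\<And>n \<omega>. L-lipschitz_on UNIV (Mn n \<omega>)" and lipMlim: "L-lipschitz_on UNIV Mlim"
    and perMn: "\<And>n \<omega>. periodic_fun_simple' (Mn n \<omega>)" and perMlim: "periodic_fun_simple' Mlim"
    and unique: "\<forall>\<theta>. \<theta> - \<theta>s \<notin> \<int> \<longrightarrow> Mlim \<theta> < Mlim \<theta>s"
    and conv: "\<And>\<theta> \<eta>. \<eta> > 0 \<Longrightarrow> (\<lambda>n. prob {\<omega>\<in>space M. \<eta> \<le> \<bar>Mn n \<omega> \<theta> - Mlim \<theta>\<bar>}) \<longlonglongrightarrow> 0"
    and argmax: "\<forall>n\<ge>1. \<forall>\<omega>\<in>space M. \<forall>\<theta>. Mn n \<omega> \<theta> \<le> Mn n \<omega> (\<theta>hat n \<omega>)"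
    and \<epsilon>: "\<epsilon> > 0"
  shows "\<exists>A :: nat \<Rightarrow> 'a set.
           (\<forall>n. A n \<in> sets M \<and> {\<omega> \<in> space M. dist_mod1 (\<theta>hat n \<omega>) \<theta>s > \<epsilon>} \<subseteq> A n)
           \<and> (\<lambda>n. measure M (A n)) \<longlonglongrightarrow> 0"
proof -
  have "0 < min \<epsilon> (1/2)" "min \<epsilon> (1/2) \<le> 1/2" using \<epsilon> by auto
  then obtain \<delta> where \<delta>: "\<delta> > 0"
    and sep: "\<And>\<theta>. min \<epsilon> (1/2) \<le> dist_mod1 \<theta> \<theta>s \<Longrightarrow> Mlim \<theta> \<le> Mlim \<theta>s - \<delta>"
    using periodic_max_well_separated[OF lipschitz_on_continuous_on[OF lipMlim] perMlim unique]
    by blast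
  define h where "h = \<delta> / (8 * (L + 1))"
  have L: "0 \<le> L" by (rule lipschitz_on_nonneg[OF lipMlim])
  have h: "h > 0" "L * h \<le> \<delta> / 8"
    using \<delta> L by (auto simp: h_def field_simps)
  obtain G where G: "finite G" "\<And>x. x \<in> {\<theta>s - 1/2..\<theta>s - 1/2 + 1} \<Longrightarrow> \<exists>y\<in>G. \<bar>x - y\<bar> \<le> h"
    using finite_grid_cover[OF h(1)] by blast
  have cover: "\<exists>y\<in>G. \<bar>x - y\<bar> \<le> h" if "x \<in> {\<theta>s - 1/2..\<theta>s + 1/2}" for x
    using G(2) that by simp
  define bad where "bad n y = {\<omega>\<in>space M. \<delta> / 4 \<le> \<bar>Mn n \<omega> y - Mlim y\<bar>}" for n y
  define A where "A n = (if n = 0 then space M else \<Union>y\<in>insert \<theta>s G. bad n y)" for n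
  have bad_sets: "bad n y \<in> sets M" for n y unfolding bad_def using meas by measurable
  have "{\<omega> \<in> space M. dist_mod1 (\<theta>hat n \<omega>) \<theta>s > \<epsilon>} \<subseteq> A n" for n
  proof (cases "n = 0")
    case False
    show ?thesis
    proof safe
      fix \<omega> assume \<omega>: "\<omega> \<in> space M" "\<epsilon> < dist_mod1 (\<theta>hat n \<omega>) \<theta>s"
      then have "\<exists>y\<in>insert \<theta>s G. \<delta> / 4 \<le> \<bar>Mn n \<omega> y - Mlim y\<bar>"
        using argmax False
        by (intro grid_deviation_if_argmax_far[where t = "\<theta>hat n \<omega>",
              OF lipMn lipMlim perMn perMlim sep cover h(2)]) auto
      then show "\<omega> \<in> A n" using \<omega>(1) False by (auto simp: A_def bad_def)
    qed
  qed (simp add: A_def)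
  moreover have "(\<lambda>n. measure M (A n)) \<longlonglongrightarrow> 0"
  proof (rule Lim_transform_eventually)
    show "(\<lambda>n. prob (\<Union>y\<in>insert \<theta>s G. bad n y)) \<longlonglongrightarrow> 0"
      unfolding bad_def using G(1) meas \<delta> by (intro prob_finite_Union_tendsto_0 conv) auto
    show "\<forall>\<^sub>F n in sequentially. prob (\<Union>y\<in>insert \<theta>s G. bad n y) = measure M (A n)"
      using eventually_gt_at_top[of 0] by eventually_elim (simp add: A_def)
  qed
  moreover have "A n \<in> sets M" for n using G(1) bad_sets by (auto simp: A_def)
  ultimately show ?thesis by blast
qed

section \<open>Rank statistics of independent noise\<close>

locale indep_reals = prob_space M for M :: "'a measure" +
  fixes Z :: "nat \<Rightarrow> 'a \<Rightarrow> real"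
  assumes indep_Z: "indep_vars (\<lambda>_. borel) Z UNIV"
begin

lemma measurable_Z [measurable]: "Z i \<in> borel_measurable M"
  using indep_Z by (simp add: indep_vars_def)

lemma indep_var_functions_of_disjoint_pairs:
  fixes g h :: "real \<Rightarrow> real \<Rightarrow> real"
  assumes disj: "{i, j} \<inter> {k, l} = {}"
    and g: "(\<lambda>(x, y). g x y) \<in> borel_measurable borel"
    and h: "(\<lambda>(x, y). h x y) \<in> borel_measurable borel"
  shows "indep_var borel (\<lambda>\<omega>. g (Z i \<omega>) (Z j \<omega>)) borel (\<lambda>\<omega>. h (Z k \<omega>) (Z l \<omega>))"
proof -
  have pair: "(\<lambda>x. (x a, x b)) \<in> measurable (PiM {a, b} (\<lambda>_. borel)) (borel :: (real \<times> real) measure)"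
    for a b :: nat
  proof -
    have "(\<lambda>x. (x a, x b)) \<in> measurable (PiM {a, b} (\<lambda>_. borel)) (borel \<Otimes>\<^sub>M borel)" by measurable
    then show ?thesis by (simp add: borel_prod)
  qed
  have "indep_var (PiM {i, j} (\<lambda>_. borel)) (\<lambda>\<omega>. restrict (\<lambda>i. Z i \<omega>) {i, j})
                  (PiM {k, l} (\<lambda>_. borel)) (\<lambda>\<omega>. restrict (\<lambda>i. Z i \<omega>) {k, l})"
    by (rule indep_var_restrict[OF indep_Z disj]) auto
  from indep_var_compose[OF this measurable_compose[OF pair g] measurable_compose[OF pair h]]
  show ?thesis by (simp add: o_def)
qed

definition ind_le :: "(nat \<Rightarrow> real) \<Rightarrow> nat \<Rightarrow> nat \<Rightarrow> 'a \<Rightarrow> real" where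
  "ind_le a i j \<omega> = (if a j + Z j \<omega> \<le> a i + Z i \<omega> then 1 else 0)"

definition weighted_rank_sum :: "(nat \<Rightarrow> real) \<Rightarrow> (nat \<Rightarrow> real) \<Rightarrow> nat \<Rightarrow> 'a \<Rightarrow> real" where
  "weighted_rank_sum a c n \<omega> = (\<Sum>i=1..n. \<Sum>j=1..n. c i * ind_le a i j \<omega>)"

definition centered_term :: "(nat \<Rightarrow> real) \<Rightarrow> (nat \<Rightarrow> real) \<Rightarrow> nat \<times> nat \<Rightarrow> 'a \<Rightarrow> real" where
  "centered_term a c p \<omega> =
     c (fst p) * (ind_le a (fst p) (snd p) \<omega> - expectation (ind_le a (fst p) (snd p)))"

lemma measurable_ind_le [measurable]: "ind_le a i j \<in> borel_measurable M"
  unfolding ind_le_def by measurable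

lemma measurable_weighted_rank_sum [measurable]: "weighted_rank_sum a c n \<in> borel_measurable M"
  unfolding weighted_rank_sum_def by measurable

lemma measurable_centered_term [measurable]: "centered_term a c p \<in> borel_measurable M"
  unfolding centered_term_def by measurable

lemma integrable_ind_le: "integrable M (ind_le a i j)"
  by (rule integrable_const_bound[where B=1]) (auto simp: ind_le_def)

lemma expectation_ind_le_bounds: "0 \<le> expectation (ind_le a i j)" "expectation (ind_le a i j) \<le> 1"
proof -
  show "0 \<le> expectation (ind_le a i j)" by (rule integral_nonneg_AE) (auto simp: ind_le_def)
  have "expectation (ind_le a i j) \<le> expectation (\<lambda>_. 1)"
    by (rule integral_mono) (auto simp: integrable_ind_le ind_le_def)
  then show "expectation (ind_le a i j) \<le> 1" by (simp add: prob_space)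
qed

lemma abs_centered_term_le: "\<bar>centered_term a c p \<omega>\<bar> \<le> \<bar>c (fst p)\<bar>"
proof -
  have "\<bar>ind_le a (fst p) (snd p) \<omega> - expectation (ind_le a (fst p) (snd p))\<bar> \<le> 1"
    using expectation_ind_le_bounds[of a "fst p" "snd p"] by (auto simp: ind_le_def)
  then show ?thesis
    unfolding centered_term_def abs_mult by (metis abs_ge_zero mult.right_neutral mult_left_mono)
qed

lemma integrable_centered_term_mult:
  "integrable M (\<lambda>\<omega>. centered_term a c p \<omega> * centered_term a c q \<omega>)"
  by (rule integrable_const_bound[where B="\<bar>c (fst p)\<bar> * \<bar>c (fst q)\<bar>"])
     (auto simp: abs_mult intro!: mult_mono abs_centered_term_le)

lemma expectation_centered_term: "expectation (centered_term a c p) = 0"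
  unfolding centered_term_def using integrable_ind_le by (simp add: prob_space)

lemma expectation_centered_term_disjoint:
  assumes disj: "{fst p, snd p} \<inter> {fst q, snd q} = {}"
  shows "expectation (\<lambda>\<omega>. centered_term a c p \<omega> * centered_term a c q \<omega>) = 0"
proof -
  define g where "g p x y = c (fst p) * ((if a (snd p) + y \<le> a (fst p) + x then 1 else 0)
                                        - expectation (ind_le a (fst p) (snd p)))" for p x y
  have g: "centered_term a c p = (\<lambda>\<omega>. g p (Z (fst p) \<omega>) (Z (snd p) \<omega>))" for p
    by (auto simp: centered_term_def ind_le_def g_def)
  have "(\<lambda>(x, y). g p x y) \<in> borel_measurable (borel \<Otimes>\<^sub>M borel)" for p
    unfolding g_def by measurable
  then have "(\<lambda>(x, y). g p x y) \<in> borel_measurable borel" for p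
    by (simp add: borel_prod)
  then have "indep_var borel (centered_term a c p) borel (centered_term a c q)"
    unfolding g using disj by (intro indep_var_functions_of_disjoint_pairs) auto
  moreover have "integrable M (centered_term a c p)" for p
    by (rule integrable_const_bound[where B="\<bar>c (fst p)\<bar>"]) (auto simp: abs_centered_term_le)
  ultimately show ?thesis
    using indep_var_lebesgue_integral expectation_centered_term by (metis mult_zero_left)
qed

lemma weighted_rank_sum_centered:
  "weighted_rank_sum a c n \<omega> - expectation (weighted_rank_sum a c n)
     = (\<Sum>p\<in>{1..n}\<times>{1..n}. centered_term a c p \<omega>)"
  unfolding weighted_rank_sum_def centered_term_def
  by (simp add: integrable_ind_le Bochner_Integration.integral_sum sum.cartesian_product split_beta'
      sum_subtractf right_diff_distrib)

lemma sum_index_coincidences: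
  assumes "i \<in> {1..n}" "j \<in> {1..n}"
  shows "(\<Sum>q\<in>{1..n}\<times>{1..n}. of_bool (fst q = i) + of_bool (fst q = j)
                              + of_bool (snd q = i) + of_bool (snd q = j) :: real) = 4 * real n"
proof -
  have "{1..n} \<inter> {i} = {i}" "{1..n} \<inter> {j} = {j}" using assms by auto
  then have "(\<Sum>k=1..n. \<Sum>l=1..n. of_bool (k = i) + of_bool (k = j)
                              + of_bool (l = i) + of_bool (l = j) :: real) = 4 * real n"
    by (simp add: sum.distrib sum_distrib_left[symmetric])
  then show ?thesis by (simp add: sum.cartesian_product split_beta')
qed

lemma variance_weighted_rank_sum_le:
  assumes c: "\<And>i. \<bar>c i\<bar> \<le> B"
  shows "variance (weighted_rank_sum a c n) \<le> 4 * real n ^ 3 * B\<^sup>2"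
proof -
  let ?P = "{1..n}\<times>{1..n}" and ?X = "centered_term a c"
  let ?w = "\<lambda>p q. of_bool (fst q = fst p) + of_bool (fst q = snd p)
                  + of_bool (snd q = fst p) + of_bool (snd q = snd p) :: real"
  have B: "0 \<le> B" using c[of 0] by linarith
  have pair_le: "expectation (\<lambda>\<omega>. ?X p \<omega> * ?X q \<omega>) \<le> B\<^sup>2 * ?w p q" for p q
  proof (cases "{fst p, snd p} \<inter> {fst q, snd q} = {}")
    case False
    have "expectation (\<lambda>\<omega>. ?X p \<omega> * ?X q \<omega>) \<le> expectation (\<lambda>\<omega>. B\<^sup>2)"
    proof (rule integral_mono[OF integrable_centered_term_mult])
      fix \<omega>
      have "\<bar>?X p \<omega>\<bar> * \<bar>?X q \<omega>\<bar> \<le> B * B"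
        using B order_trans[OF abs_centered_term_le c] by (intro mult_mono) auto
      then show "?X p \<omega> * ?X q \<omega> \<le> B\<^sup>2"
        by (metis abs_ge_self abs_mult order_trans power2_eq_square)
    qed simp
    also have "\<dots> \<le> B\<^sup>2 * ?w p q" using False by (auto simp: prob_space)
    finally show ?thesis .
  qed (simp add: expectation_centered_term_disjoint)
  have "variance (weighted_rank_sum a c n) = (\<Sum>p\<in>?P. \<Sum>q\<in>?P. expectation (\<lambda>\<omega>. ?X p \<omega> * ?X q \<omega>))"
    unfolding weighted_rank_sum_centered power2_eq_square sum_product
    by (simp add: Bochner_Integration.integral_sum integrable_centered_term_mult integrable_sum)
  also have "\<dots> \<le> (\<Sum>p\<in>?P. \<Sum>q\<in>?P. B\<^sup>2 * ?w p q)"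
    by (intro sum_mono pair_le)
  also have "\<dots> = (\<Sum>p\<in>?P. B\<^sup>2 * (4 * real n))"
  proof (rule sum.cong[OF refl])
    fix p assume "p \<in> ?P"
    then show "(\<Sum>q\<in>?P. B\<^sup>2 * ?w p q) = B\<^sup>2 * (4 * real n)"
      using sum_index_coincidences[of "fst p" n "snd p"] by (auto simp: sum_distrib_left[symmetric])
  qed
  also have "\<dots> = 4 * real n ^ 3 * B\<^sup>2" by (simp add: power3_eq_cube power2_eq_square)
  finally show ?thesis .
qed

lemma prob_weighted_rank_sum_deviation_le:
  assumes c: "\<And>i. \<bar>c i\<bar> \<le> B" and t: "t > 0"
  shows "prob {\<omega>\<in>space M. t \<le> \<bar>weighted_rank_sum a c n \<omega> - expectation (weighted_rank_sum a c n)\<bar>}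
           \<le> 4 * real n ^ 3 * B\<^sup>2 / t\<^sup>2"
proof -
  let ?K = "\<Sum>i=1..n. \<Sum>j=1..n. \<bar>c i\<bar>"
  have "\<bar>weighted_rank_sum a c n \<omega>\<bar> \<le> ?K" for \<omega>
    unfolding weighted_rank_sum_def
    by (intro order_trans[OF sum_abs sum_mono] order_trans[OF sum_abs sum_mono])
       (simp add: abs_mult ind_le_def)
  then have "(weighted_rank_sum a c n \<omega>)\<^sup>2 \<le> ?K\<^sup>2" for \<omega>
    using power_mono[OF _ abs_ge_zero, of _ ?K 2] by simp
  then have "integrable M (\<lambda>\<omega>. (weighted_rank_sum a c n \<omega>)\<^sup>2)"
    by (intro integrable_const_bound[where B="?K\<^sup>2"]) auto
  then have "prob {\<omega>\<in>space M. t \<le> \<bar>weighted_rank_sum a c n \<omega> - expectation (weighted_rank_sum a c n)\<bar>}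
               \<le> variance (weighted_rank_sum a c n) / t\<^sup>2"
    using Chebyshev_inequality[OF measurable_weighted_rank_sum _ t] by simp
  also have "\<dots> \<le> 4 * real n ^ 3 * B\<^sup>2 / t\<^sup>2"
    by (intro divide_right_mono variance_weighted_rank_sum_le c) simp
  finally show ?thesis .
qed

end

locale iid_density = indep_reals +
  fixes \<phi> :: "real \<Rightarrow> real"
  assumes measurable_\<phi>: "\<phi> \<in> borel_measurable borel"
    and \<phi>_nonneg: "\<And>z. 0 \<le> \<phi> z"
    and distributed_Z: "\<And>i. distributed M lborel (Z i) (\<lambda>z. ennreal (\<phi> z))"
begin

definition law :: "real measure" where
  "law = density lborel (\<lambda>z. ennreal (\<phi> z))"

lemma law_eq_distr: "law = distr M borel (Z i)"
proof -
  have "law = distr M lborel (Z i)"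
    using distributed_Z[of i] unfolding distributed_def law_def by auto
  then show ?thesis by (simp cong: distr_cong)
qed

lemma prob_space_law: "prob_space law"
  unfolding law_eq_distr[of 0] by (rule prob_space_distr) simp

lemma sets_law [simp, measurable_cong]: "sets law = sets borel"
  unfolding law_def by simp

lemma Phi_eq_measure: "Phi \<phi> t = measure law {..t}"
proof -
  have "measure law {..t} = integral\<^sup>L law (indicator {..t})" by simp
  also have "\<dots> = integral\<^sup>L lborel (\<lambda>x. \<phi> x *\<^sub>R indicator {..t} x)"
    unfolding law_def using measurable_\<phi> \<phi>_nonneg by (intro integral_density) auto
  finally show ?thesis unfolding Phi_def set_lebesgue_integral_def by (simp add: mult.commute)
qed

lemma measure_law_singleton: "measure law {t} = 0"
proof -
  have "emeasure law {t} = (\<integral>\<^sup>+x. ennreal (\<phi> t) * indicator {t} x \<partial>lborel)"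
    unfolding law_def using measurable_\<phi>
    by (subst emeasure_density) (auto intro!: nn_integral_cong split: split_indicator)
  then show ?thesis by (simp add: measure_def)
qed

lemma Phi2_eq_integral: "Phi2 \<phi> c = (\<integral>x. Phi \<phi> (c + x) \<partial>law)"
proof -
  interpret law: prob_space law by (rule prob_space_law)
  have "Phi \<phi> \<in> borel_measurable borel"
    using law.finite_measure_mono
    by (intro borel_measurable_mono) (auto simp: mono_def Phi_eq_measure)
  then have "(\<integral>x. Phi \<phi> (c + x) \<partial>law) = integral\<^sup>L lborel (\<lambda>x. \<phi> x *\<^sub>R Phi \<phi> (c + x))"
    unfolding law_def using measurable_\<phi> \<phi>_nonneg by (intro integral_density) auto
  then show ?thesis unfolding Phi2_def by (simp add: mult.commute)
qed

lemma integral_pair_eq: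
  fixes g :: "real \<Rightarrow> real \<Rightarrow> real"
  assumes ij: "i \<noteq> j" and g: "(\<lambda>(x, y). g x y) \<in> borel_measurable (borel \<Otimes>\<^sub>M borel)"
    and bounded: "\<And>x y. \<bar>g x y\<bar> \<le> B"
  shows "expectation (\<lambda>\<omega>. g (Z i \<omega>) (Z j \<omega>)) = (\<integral>x. \<integral>y. g x y \<partial>law \<partial>law)"
proof -
  interpret law: prob_space law by (rule prob_space_law)
  interpret law2: pair_prob_space law law ..
  have "fst \<in> borel_measurable (borel :: (real \<times> real) measure)"
    using measurable_fst[of "borel :: real measure" "borel :: real measure"] by (simp add: borel_prod)
  then have "indep_var borel (Z i) borel (Z j)"
    using indep_var_functions_of_disjoint_pairs[of i i j j "\<lambda>x y. x" "\<lambda>x y. x"] ij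
    by (simp add: case_prod_beta')
  moreover have "law \<Otimes>\<^sub>M law = distr M borel (Z i) \<Otimes>\<^sub>M distr M borel (Z j)"
    using law_eq_distr by metis
  ultimately have joint: "distr M (borel \<Otimes>\<^sub>M borel) (\<lambda>\<omega>. (Z i \<omega>, Z j \<omega>)) = law \<Otimes>\<^sub>M law"
    unfolding indep_var_distribution_eq by simp
  have "expectation (\<lambda>\<omega>. g (Z i \<omega>) (Z j \<omega>))
          = integral\<^sup>L (distr M (borel \<Otimes>\<^sub>M borel) (\<lambda>\<omega>. (Z i \<omega>, Z j \<omega>))) (\<lambda>(x, y). g x y)"
    using g by (subst integral_distr) auto
  also have "\<dots> = (\<integral>x. \<integral>y. g x y \<partial>law \<partial>law)"
  proof -
    have "integrable (law \<Otimes>\<^sub>M law) (\<lambda>(x, y). g x y)"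
      using g bounded by (intro law2.P.integrable_const_bound[where B=B]) (auto cong: measurable_cong_sets)
    from law2.integral_fst'[OF this] show ?thesis unfolding joint by simp
  qed
  finally show ?thesis .
qed

lemma prob_pair_eq:
  assumes ij: "i \<noteq> j" and P: "Measurable.pred (borel \<Otimes>\<^sub>M borel) (\<lambda>(x, y). P x y)"
  shows "prob {\<omega>\<in>space M. P (Z i \<omega>) (Z j \<omega>)} = (\<integral>x. measure law {y. P x y} \<partial>law)"
proof -
  let ?S = "{\<omega>\<in>space M. P (Z i \<omega>) (Z j \<omega>)}"
  have "?S \<in> sets M" using P by measurable
  then have "prob ?S = expectation (indicator ?S)" by simp
  also have "\<dots> = expectation (\<lambda>\<omega>. of_bool (P (Z i \<omega>) (Z j \<omega>)))"
    by (intro Bochner_Integration.integral_cong) (auto simp: indicator_def)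
  also have "\<dots> = (\<integral>x. \<integral>y. of_bool (P x y) \<partial>law \<partial>law)"
    using P by (intro integral_pair_eq[OF ij, where B=1]) auto
  also have "\<dots> = (\<integral>x. measure law {y. P x y} \<partial>law)"
  proof (intro Bochner_Integration.integral_cong refl)
    fix x
    interpret law: prob_space law by (rule prob_space_law)
    have "Pair x -` {p\<in>space (borel \<Otimes>\<^sub>M borel). (\<lambda>(x, y). P x y) p} \<in> sets borel"
      using P unfolding pred_def by (rule sets_Pair1)
    then have "{y. P x y} \<in> sets law" by (simp add: space_pair_measure)
    moreover have "(\<lambda>y. of_bool (P x y)) = (indicator {y. P x y} :: real \<Rightarrow> real)"
      by (auto simp: indicator_def)
    ultimately show "(\<integral>y. of_bool (P x y) \<partial>law) = measure law {y. P x y}" by simp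
  qed
  finally show ?thesis .
qed

lemma prob_diff_le_eq_Phi2:
  "i \<noteq> j \<Longrightarrow> prob {\<omega>\<in>space M. Z j \<omega> - Z i \<omega> \<le> c} = Phi2 \<phi> c"
  using prob_pair_eq[of i j "\<lambda>x y. y - x \<le> c"]
  by (simp add: Phi2_eq_integral Phi_eq_measure atMost_def algebra_simps)

lemma prob_diff_eq_0:
  "i \<noteq> j \<Longrightarrow> prob {\<omega>\<in>space M. Z j \<omega> - Z i \<omega> = c} = 0"
proof -
  assume "i \<noteq> j"
  moreover have "{y. y - x = c} = {c + x}" for x by auto
  ultimately show ?thesis using prob_pair_eq[of i j "\<lambda>x y. y - x = c"] by (simp add: measure_law_singleton)
qed

lemma Phi2_bounds: "0 \<le> Phi2 \<phi> c" "Phi2 \<phi> c \<le> 1"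
  unfolding prob_diff_le_eq_Phi2[of 0 1 c, symmetric, simplified] by (rule measure_nonneg prob_le_1)+

lemma continuous_Phi2: "continuous_on S (Phi2 \<phi>)"
proof -
  let ?Q = "distr M borel (\<lambda>\<omega>. Z 1 \<omega> - Z 0 \<omega>)"
  interpret Q: real_distribution ?Q
    by (auto simp: real_distribution_def real_distribution_axioms_def intro!: prob_space_distr)
  have "measure ?Q A = prob {\<omega>\<in>space M. Z 1 \<omega> - Z 0 \<omega> \<in> A}" if "A \<in> sets borel" for A
    using that by (subst measure_distr) (auto intro!: arg_cong[where f=prob])
  then have "cdf ?Q = Phi2 \<phi>" "\<And>c. measure ?Q {c} = 0"
    using prob_diff_le_eq_Phi2[of 0 1] prob_diff_eq_0[of 0 1] by (auto simp: cdf_def)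
  then show ?thesis using Q.isCont_cdf by (metis continuous_at_imp_continuous_on)
qed

lemma expectation_ind_le:
  "expectation (ind_le a i j) = (if i = j then 1 else Phi2 \<phi> (a i - a j))"
proof (cases "i = j")
  case False
  let ?S = "{\<omega>\<in>space M. Z j \<omega> - Z i \<omega> \<le> a i - a j}"
  have "?S \<in> sets M" by measurable
  then have "prob ?S = expectation (indicator ?S)" by simp
  also have "\<dots> = expectation (ind_le a i j)"
    by (intro Bochner_Integration.integral_cong) (auto simp: indicator_def ind_le_def algebra_simps)
  finally have "expectation (ind_le a i j) = prob ?S" ..
  then show ?thesis using prob_diff_le_eq_Phi2 False by simp
next
  case True
  then have "ind_le a i j = (\<lambda>_. 1)" by (simp add: ind_le_def fun_eq_iff)
  then show ?thesis using True by (simp add: prob_space)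
qed

end

section \<open>The rank-based shift model\<close>

lemma rank_le: "rank Y n i \<le> n"
proof -
  have "rank Y n i \<le> card {1..n}" unfolding rank_def by (rule card_mono) auto
  then show ?thesis by simp
qed

lemma lipschitz_on_Mhat:
  assumes lip: "L-lipschitz_on UNIV f"
  shows "L-lipschitz_on UNIV (Mhat f Y n)"
proof (rule lipschitz_onI)
  show L: "0 \<le> L" by (rule lipschitz_on_nonneg[OF lip])
  fix a b :: real
  let ?r = "\<lambda>i. real (rank Y n i) / real n"
  have summand: "\<bar>?r i * (f (real i / n - a) - f (real i / n - b))\<bar> \<le> L * \<bar>a - b\<bar>" for i
  proof -
    have "\<bar>?r i\<bar> \<le> 1" using rank_le[of Y n i] by (cases "n = 0") auto
    moreover have "\<bar>f (real i / n - a) - f (real i / n - b)\<bar> \<le> L * \<bar>a - b\<bar>"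
      using lipschitz_onD[OF lip, of "real i / n - a" "real i / n - b"]
      by (simp add: dist_real_def abs_minus_commute)
    ultimately have "\<bar>?r i\<bar> * \<bar>f (real i / n - a) - f (real i / n - b)\<bar> \<le> 1 * (L * \<bar>a - b\<bar>)"
      by (intro mult_mono) auto
    then show ?thesis by (simp add: abs_mult)
  qed
  have "Mhat f Y n a - Mhat f Y n b
      = 1 / n * ((\<Sum>i=1..n. ?r i * f (real i / n - a)) - (\<Sum>i=1..n. ?r i * f (real i / n - b)))"
    unfolding Mhat_def by (rule right_diff_distrib[symmetric])
  also have "\<dots> = 1 / n * (\<Sum>i=1..n. ?r i * (f (real i / n - a) - f (real i / n - b)))"
    by (simp only: sum_subtractf[symmetric] right_diff_distrib)
  finally have "\<bar>Mhat f Y n a - Mhat f Y n b\<bar>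
      = \<bar>\<Sum>i=1..n. ?r i * (f (real i / n - a) - f (real i / n - b))\<bar> / n"
    by (simp add: abs_mult)
  also have "\<dots> \<le> (\<Sum>i=1..n. L * \<bar>a - b\<bar>) / n"
    by (intro divide_right_mono order_trans[OF sum_abs sum_mono] summand) simp
  also have "\<dots> \<le> L * \<bar>a - b\<bar>" using L by (cases "n = 0") auto
  finally show "dist (Mhat f Y n a) (Mhat f Y n b) \<le> L * dist a b" by (simp add: dist_real_def)
qed

lemma periodic_Mhat:
  assumes "periodic_fun_simple' f"
  shows "periodic_fun_simple' (Mhat f Y n)"
proof
  interpret periodic_fun_simple' f by (rule assms)
  fix \<theta> :: real
  have "f (x - (\<theta> + 1)) = f (x - \<theta>)" for x using minus_1[of "x - \<theta>"] by (simp add: algebra_simps)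
  then show "Mhat f Y n (\<theta> + 1) = Mhat f Y n \<theta>" by (simp add: Mhat_def)
qed

lemma periodic_Mfun:
  assumes "periodic_fun_simple' f"
  shows "periodic_fun_simple' (Mfun f \<phi> \<theta>s)"
proof
  interpret periodic_fun_simple' f by (rule assms)
  fix \<theta> :: real
  have "f (x + \<theta>s - (\<theta> + 1)) = f (x + \<theta>s - \<theta>)" for x
    using minus_1[of "x + \<theta>s - \<theta>"] by (simp add: algebra_simps)
  then show "Mfun f \<phi> \<theta>s (\<theta> + 1) = Mfun f \<phi> \<theta>s \<theta>" by (simp add: Mfun_def)
qed

lemma periodic_continuous_bounded:
  fixes f :: "real \<Rightarrow> real"
  assumes cont: "continuous_on UNIV f" and per: "periodic_fun_simple' f"
  obtains B where "\<And>x. \<bar>f x\<bar> \<le> B"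
proof -
  interpret periodic_fun_simple' f by (rule per)
  have "bounded (f ` {0..1})"
    by (intro compact_imp_bounded compact_continuous_image continuous_on_subset[OF cont]) auto
  then obtain B where B: "\<And>y. y \<in> f ` {0..1} \<Longrightarrow> \<bar>y\<bar> \<le> B"
    unfolding bounded_iff by auto
  have "\<bar>f x\<bar> \<le> B" for x
  proof -
    have "f x = f (x - of_int \<lfloor>x\<rfloor>)" by (rule minus_of_int[symmetric])
    moreover have "x - of_int \<lfloor>x\<rfloor> \<in> {0..1}" by auto linarith
    ultimately show ?thesis using B by auto
  qed
  then show ?thesis by (rule that)
qed

locale rank_model = iid_density +
  fixes f :: "real \<Rightarrow> real" and L \<theta>s :: real
  assumes lipschitz_f: "L-lipschitz_on UNIV f" and periodic_f: "periodic_fun_simple' f"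
begin

sublocale f: periodic_fun_simple' f by (rule periodic_f)

definition kernel :: "real \<Rightarrow> real \<Rightarrow> real \<Rightarrow> real" where
  "kernel \<theta> u v = Phi2 \<phi> (f u - f v) * f (u + \<theta>s - \<theta>)"

definition signal :: "nat \<Rightarrow> nat \<Rightarrow> real" where
  "signal n i = f (real i / real n - \<theta>s)"

definition score :: "nat \<Rightarrow> real \<Rightarrow> nat \<Rightarrow> real" where
  "score n \<theta> i = f (real i / real n - \<theta>)"

lemma continuous_f: "continuous_on S f"
  using continuous_on_subset[OF lipschitz_on_continuous_on[OF lipschitz_f]] by blast

lemma bounded_f: obtains B where "\<And>x. \<bar>f x\<bar> \<le> B"
  using periodic_continuous_bounded[OF continuous_f periodic_f] by blast

lemma continuous_kernel: "continuous_on S (\<lambda>(u, v). kernel \<theta> u v)"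
  unfolding kernel_def case_prod_beta'
  by (intro continuous_intros continuous_on_compose2[OF continuous_Phi2]
        continuous_on_compose2[OF continuous_f]) auto

lemma continuous_kernel_slice: "continuous_on S (kernel \<theta> u)"
  unfolding kernel_def by (intro continuous_intros continuous_on_compose2[OF continuous_Phi2]
      continuous_on_compose2[OF continuous_f]) auto

lemma continuous_integral_kernel: "continuous_on S (\<lambda>u. integral {a..b} (kernel \<theta> u))"
  using integral_continuous_on_param[of S a b "kernel \<theta>"] continuous_kernel by simp

lemma Mfun_eq_integral:
  "Mfun f \<phi> \<theta>s \<theta> = integral {a..a+1} (\<lambda>u. integral {a..a+1} (kernel \<theta> u))"
proof -
  have lbint: "(LBINT x=0..1. g x) = integral {0..1} g" if "continuous_on UNIV g" for g :: "real \<Rightarrow> real"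
  proof -
    have "set_integrable lborel {0..1::real} g"
      unfolding set_integrable_def using that
      by (intro borel_integrable_compact) (auto intro: continuous_on_subset)
    then show ?thesis by (simp add: interval_integral_eq_integral zero_ereal_def one_ereal_def)
  qed
  interpret per_kernel: periodic_fun_simple' "kernel \<theta> u" for u
    by unfold_locales (simp add: kernel_def f.plus_1)
  interpret per_int: periodic_fun_simple' "\<lambda>u. integral {0..1} (kernel \<theta> u)"
  proof
    fix u
    have "f (u + 1 + \<theta>s - \<theta>) = f (u + \<theta>s - \<theta>)" using f.plus_1[of "u + \<theta>s - \<theta>"] by (simp add: algebra_simps)
    then have "kernel \<theta> (u + 1) = kernel \<theta> u" by (simp add: kernel_def fun_eq_iff f.plus_1)
    then show "integral {0..1} (kernel \<theta> (u + 1)) = integral {0..1} (kernel \<theta> u)" by simp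
  qed
  have "(LBINT x=0..1. kernel \<theta> u x) = integral {0..1} (kernel \<theta> u)" for u
    by (rule lbint[OF continuous_kernel_slice])
  then have "Mfun f \<phi> \<theta>s \<theta> = (LBINT u=0..1. integral {0..1} (kernel \<theta> u))"
    unfolding Mfun_def by (simp only: kernel_def)
  also have "\<dots> = integral {0..1} (\<lambda>u. integral {0..1} (kernel \<theta> u))"
    by (rule lbint[OF continuous_integral_kernel])
  also have "\<dots> = integral {a..a+1} (\<lambda>u. integral {0..1} (kernel \<theta> u))"
    by (intro integral_periodic_shift[symmetric] continuous_integral_kernel) unfold_locales
  also have "\<dots> = integral {a..a+1} (\<lambda>u. integral {a..a+1} (kernel \<theta> u))"
    by (intro integral_cong integral_periodic_shift[symmetric] continuous_kernel_slice) unfold_locales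
  finally show ?thesis .
qed

lemma lipschitz_on_Mfun: "L-lipschitz_on UNIV (Mfun f \<phi> \<theta>s)"
proof (rule lipschitz_onI)
  show L: "0 \<le> L" by (rule lipschitz_on_nonneg[OF lipschitz_f])
  fix a b :: real
  have "\<bar>kernel a u v - kernel b u v\<bar> \<le> L * \<bar>a - b\<bar>" for u v
  proof -
    have "\<bar>kernel a u v - kernel b u v\<bar> = \<bar>Phi2 \<phi> (f u - f v)\<bar> * \<bar>f (u + \<theta>s - a) - f (u + \<theta>s - b)\<bar>"
      unfolding kernel_def by (simp add: abs_mult[symmetric] right_diff_distrib)
    also have "\<dots> \<le> 1 * (L * \<bar>a - b\<bar>)"
      using Phi2_bounds lipschitz_onD[OF lipschitz_f, of "u + \<theta>s - a" "u + \<theta>s - b"] L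
      by (intro mult_mono) (auto simp: dist_real_def abs_minus_commute)
    finally show ?thesis by simp
  qed
  then have "\<bar>integral {0..1} (kernel a u) - integral {0..1} (kernel b u)\<bar> \<le> L * \<bar>a - b\<bar>" for u
    using abs_integral_diff_le[OF continuous_kernel_slice continuous_kernel_slice, of 0 1] by simp
  then have "\<bar>integral {0..1} (\<lambda>u. integral {0..1} (kernel a u))
             - integral {0..1} (\<lambda>u. integral {0..1} (kernel b u))\<bar> \<le> L * \<bar>a - b\<bar>"
    using abs_integral_diff_le[OF continuous_integral_kernel continuous_integral_kernel, of 0 1] by simp
  then show "dist (Mfun f \<phi> \<theta>s a) (Mfun f \<phi> \<theta>s b) \<le> L * dist a b"
    using Mfun_eq_integral[of _ 0] by (simp add: dist_real_def)
qed

lemma Mhat_eq_weighted_rank_sum: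
  "Mhat f (\<lambda>i. signal n i + Z i \<omega>) n \<theta> = weighted_rank_sum (signal n) (score n \<theta>) n \<omega> / (real n)\<^sup>2"
proof -
  have card: "real (card {j\<in>{1..n}. P j}) = (\<Sum>j=1..n. if P j then 1 else 0)" for P
    by (simp flip: sum.inter_filter)
  have "real (rank (\<lambda>i. signal n i + Z i \<omega>) n i) = (\<Sum>j=1..n. ind_le (signal n) i j \<omega>)" for i
    unfolding rank_def card ind_le_def ..
  then show ?thesis
    unfolding Mhat_def weighted_rank_sum_def score_def
    by (simp add: sum_distrib_left sum_divide_distrib power2_eq_square mult.commute)
qed

text \<open>
  The diagonal \<open>i = j\<close> of the double sum is the only place where the expected rank comparisons
  differ from \<open>Phi2\<close>; it contributes \<open>O(1/n)\<close> after normalisation.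
\<close>

lemma expectation_weighted_rank_sum_tendsto:
  "(\<lambda>n. expectation (weighted_rank_sum (signal n) (score n \<theta>) n) / (real n)\<^sup>2) \<longlonglongrightarrow> Mfun f \<phi> \<theta>s \<theta>"
proof -
  obtain B where B: "\<And>x. \<bar>f x\<bar> \<le> B" using bounded_f by blast
  let ?u = "\<lambda>n i. - \<theta>s + real i / real n"
  let ?main = "\<lambda>n. (\<Sum>i=1..n. \<Sum>j=1..n. kernel \<theta> (?u n i) (?u n j)) / (real n)\<^sup>2"
  let ?rem = "\<lambda>n. (\<Sum>i=1..n. score n \<theta> i * (1 - Phi2 \<phi> 0)) / (real n)\<^sup>2"
  have split: "expectation (weighted_rank_sum (signal n) (score n \<theta>) n) / (real n)\<^sup>2 = ?main n + ?rem n" for n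
  proof -
    have "score n \<theta> i * expectation (ind_le (signal n) i j)
          = kernel \<theta> (?u n i) (?u n j) + (if i = j then score n \<theta> i * (1 - Phi2 \<phi> 0) else 0)" for i j
      by (simp add: expectation_ind_le kernel_def signal_def score_def algebra_simps)
    then have "expectation (weighted_rank_sum (signal n) (score n \<theta>) n)
          = (\<Sum>i=1..n. \<Sum>j=1..n. kernel \<theta> (?u n i) (?u n j)) + (\<Sum>i=1..n. score n \<theta> i * (1 - Phi2 \<phi> 0))"
      unfolding weighted_rank_sum_def
      by (simp add: Bochner_Integration.integral_sum integrable_ind_le sum.distrib)
    then show ?thesis by (simp add: add_divide_distrib)
  qed
  have "?main \<longlonglongrightarrow> Mfun f \<phi> \<theta>s \<theta>"
    using riemann_sum_2d_tendsto[where a="- \<theta>s" and G="kernel \<theta>", OF continuous_kernel]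
      Mfun_eq_integral[of \<theta> "- \<theta>s"]
    by simp
  moreover have "?rem \<longlonglongrightarrow> 0"
  proof (rule Lim_null_comparison)
    show "\<forall>\<^sub>F n in sequentially. norm (?rem n) \<le> 2 * B * inverse (real n)"
    proof (rule eventually_sequentiallyI[of 1])
      fix n :: nat assume "n \<ge> 1"
      have "\<bar>score n \<theta> i * (1 - Phi2 \<phi> 0)\<bar> \<le> B * 2" for i
        unfolding score_def abs_mult using B order_trans[OF abs_ge_zero B] Phi2_bounds[of 0]
        by (intro mult_mono) auto
      then have "\<bar>\<Sum>i=1..n. score n \<theta> i * (1 - Phi2 \<phi> 0)\<bar> \<le> (\<Sum>i=1..n. B * 2)"
        by (intro order_trans[OF sum_abs sum_mono])
      then show "norm (?rem n) \<le> 2 * B * inverse (real n)"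
        using \<open>n \<ge> 1\<close> by (simp add: power2_eq_square field_simps)
    qed
    show "(\<lambda>n. 2 * B * inverse (real n)) \<longlonglongrightarrow> 0"
      by (rule tendsto_mult_right_zero[OF lim_inverse_n])
  qed
  ultimately show ?thesis unfolding split using tendsto_add by fastforce
qed

lemma prob_Mhat_deviation_le:
  assumes B: "\<And>x. \<bar>f x\<bar> \<le> B" and n: "n > 0" and \<eta>: "\<eta> > 0"
    and bias: "\<bar>expectation (weighted_rank_sum (signal n) (score n \<theta>) n) / (real n)\<^sup>2 - Mfun f \<phi> \<theta>s \<theta>\<bar>
                 < \<eta> / 2"
  shows "prob {\<omega>\<in>space M. \<eta> \<le> \<bar>Mhat f (\<lambda>i. signal n i + Z i \<omega>) n \<theta> - Mfun f \<phi> \<theta>s \<theta>\<bar>}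
           \<le> 16 * B\<^sup>2 / \<eta>\<^sup>2 * inverse (real n)"
proof -
  let ?S = "weighted_rank_sum (signal n) (score n \<theta>) n" and ?t = "\<eta> / 2 * (real n)\<^sup>2"
  have "{\<omega>\<in>space M. \<eta> \<le> \<bar>Mhat f (\<lambda>i. signal n i + Z i \<omega>) n \<theta> - Mfun f \<phi> \<theta>s \<theta>\<bar>}
        \<subseteq> {\<omega>\<in>space M. ?t \<le> \<bar>?S \<omega> - expectation ?S\<bar>}"
  proof safe
    fix \<omega> assume "\<eta> \<le> \<bar>Mhat f (\<lambda>i. signal n i + Z i \<omega>) n \<theta> - Mfun f \<phi> \<theta>s \<theta>\<bar>"
    then have "\<eta> / 2 \<le> \<bar>?S \<omega> / (real n)\<^sup>2 - expectation ?S / (real n)\<^sup>2\<bar>"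
      using bias unfolding Mhat_eq_weighted_rank_sum by linarith
    then show "?t \<le> \<bar>?S \<omega> - expectation ?S\<bar>"
      using n by (simp add: diff_divide_distrib[symmetric] pos_le_divide_eq)
  qed
  then have "prob {\<omega>\<in>space M. \<eta> \<le> \<bar>Mhat f (\<lambda>i. signal n i + Z i \<omega>) n \<theta> - Mfun f \<phi> \<theta>s \<theta>\<bar>}
        \<le> prob {\<omega>\<in>space M. ?t \<le> \<bar>?S \<omega> - expectation ?S\<bar>}"
    by (intro finite_measure_mono) measurable
  also have "\<dots> \<le> 4 * real n ^ 3 * B\<^sup>2 / ?t\<^sup>2"
    using B \<eta> n by (intro prob_weighted_rank_sum_deviation_le) (auto simp: score_def)
  also have "\<dots> = 16 * B\<^sup>2 / \<eta>\<^sup>2 * inverse (real n)"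
    using \<eta> n by (simp add: field_simps power2_eq_square power3_eq_cube)
  finally show ?thesis .
qed

lemma prob_Mhat_deviation_tendsto:
  assumes \<eta>: "\<eta> > 0"
  shows "(\<lambda>n. prob {\<omega>\<in>space M. \<eta> \<le> \<bar>Mhat f (\<lambda>i. signal n i + Z i \<omega>) n \<theta> - Mfun f \<phi> \<theta>s \<theta>\<bar>}) \<longlonglongrightarrow> 0"
proof -
  obtain B where B: "\<And>x. \<bar>f x\<bar> \<le> B" using bounded_f by blast
  have "\<forall>\<^sub>F n in sequentially. dist (expectation (weighted_rank_sum (signal n) (score n \<theta>) n) / (real n)\<^sup>2)
                                  (Mfun f \<phi> \<theta>s \<theta>) < \<eta> / 2"
    using expectation_weighted_rank_sum_tendsto[of \<theta>] half_gt_zero[OF \<eta>] unfolding tendsto_iff by blast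
  with eventually_gt_at_top[of 0]
  have "\<forall>\<^sub>F n in sequentially.
      norm (prob {\<omega>\<in>space M. \<eta> \<le> \<bar>Mhat f (\<lambda>i. signal n i + Z i \<omega>) n \<theta> - Mfun f \<phi> \<theta>s \<theta>\<bar>})
        \<le> 16 * B\<^sup>2 / \<eta>\<^sup>2 * inverse (real n)"
  proof eventually_elim
    case (elim n)
    then show ?case using prob_Mhat_deviation_le[OF B elim(1) \<eta>] by (simp add: dist_real_def)
  qed
  moreover have "(\<lambda>n. 16 * B\<^sup>2 / \<eta>\<^sup>2 * inverse (real n)) \<longlonglongrightarrow> 0"
    by (rule tendsto_mult_right_zero[OF lim_inverse_n])
  ultimately show ?thesis by (rule Lim_null_comparison)
qed

end

theorem theorem1:
  fixes M :: "'a measure"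
    and f :: "real \<Rightarrow> real" and \<phi> :: "real \<Rightarrow> real"
    and Z :: "nat \<Rightarrow> 'a \<Rightarrow> real"
    and \<theta>s :: real
    and \<theta>hat :: "nat \<Rightarrow> 'a \<Rightarrow> real"
  assumes "prob_space M"
    and "\<exists>L. L-lipschitz_on UNIV f"
    and "\<forall>x. f (x + 1) = f x"
    and "\<forall>\<theta>. \<theta> - \<theta>s \<notin> \<int> \<longrightarrow> emeasure lborel {x. f (x - \<theta>) \<noteq> f (x - \<theta>s)} > 0"
    and "\<phi> \<in> borel_measurable borel" and "\<forall>z. \<phi> z \<ge> 0" and "\<forall>z. \<phi> (- z) = \<phi> z"
    and "prob_space.indep_vars M (\<lambda>_. borel) Z UNIV"
    and "\<forall>i. distributed M lborel (Z i) (\<lambda>z. ennreal (\<phi> z))"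
    and "\<forall>\<theta>. \<theta> - \<theta>s \<notin> \<int> \<longrightarrow> Mfun f \<phi> \<theta>s \<theta> < Mfun f \<phi> \<theta>s \<theta>s"
    and "\<forall>n\<ge>1. \<forall>\<omega>\<in>space M. \<forall>\<theta>.
           Mhat f (\<lambda>i. f (real i / real n - \<theta>s) + Z i \<omega>) n \<theta>
             \<le> Mhat f (\<lambda>i. f (real i / real n - \<theta>s) + Z i \<omega>) n (\<theta>hat n \<omega>)"
  shows "\<forall>\<epsilon>>0. \<exists>A :: nat \<Rightarrow> 'a set.
           (\<forall>n. A n \<in> sets M \<and> {\<omega> \<in> space M. dist_mod1 (\<theta>hat n \<omega>) \<theta>s > \<epsilon>} \<subseteq> A n)
           \<and> (\<lambda>n. measure M (A n)) \<longlonglongrightarrow> 0"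
proof (intro allI impI)
  fix \<epsilon> :: real assume "\<epsilon> > 0"
  obtain L where lip: "L-lipschitz_on UNIV f" using assms(2) by blast
  have "rank_model M Z \<phi> f L"
    unfolding rank_model_def rank_model_axioms_def iid_density_def iid_density_axioms_def
      indep_reals_def indep_reals_axioms_def periodic_fun_simple'_def
    using assms(1,3,5,6,8,9) lip by blast
  then interpret rank_model M Z \<phi> f L \<theta>s .
  let ?Mhat = "\<lambda>n \<omega>. Mhat f (\<lambda>i. f (real i / real n - \<theta>s) + Z i \<omega>) n"
  have meas: "(\<lambda>\<omega>. ?Mhat n \<omega> \<theta>) \<in> borel_measurable M" for n \<theta>
    using Mhat_eq_weighted_rank_sum[of n _ \<theta>] by (simp add: signal_def)
  have conv: "(\<lambda>n. prob {\<omega>\<in>space M. \<eta> \<le> \<bar>?Mhat n \<omega> \<theta> - Mfun f \<phi> \<theta>s \<theta>\<bar>}) \<longlonglongrightarrow> 0"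
    if "\<eta> > 0" for \<theta> \<eta>
    using prob_Mhat_deviation_tendsto[OF that] by (simp add: signal_def)
  show "\<exists>A :: nat \<Rightarrow> 'a set.
           (\<forall>n. A n \<in> sets M \<and> {\<omega> \<in> space M. dist_mod1 (\<theta>hat n \<omega>) \<theta>s > \<epsilon>} \<subseteq> A n)
           \<and> (\<lambda>n. measure M (A n)) \<longlonglongrightarrow> 0"
    by (rule argmax_consistent_mod1[where Mn = ?Mhat, OF meas lipschitz_on_Mhat[OF lip] lipschitz_on_Mfun
          periodic_Mhat[OF periodic_f] periodic_Mfun[OF periodic_f] assms(10) conv assms(11) \<open>\<epsilon> > 0\<close>])
qed

end
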